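(* Let $f:\mathbb{Z}^n\to\mathbb{Z}\cup\{+\infty\}$ be an integer-valued M-convex function with bounded $\operatorname{dom} f$ and $x_0\in\operatorname{dom} f$. If algorithm M-LSD2 started at $x_0$ performs exactly $k$ calls of M-IncSlope before terminating, then $\tfrac12 k^2\le f(x_0)-\min\{f(x): x\in\operatorname{dom} f\}$; hence $k\le\sqrt{2\,(f(x_0)-\min f)}$.
   Context: $N=\{1,\dots,n\}$; $\chi_i\in\{0,1\}^n$ is the $i$-th unit vector. For $f:\mathbb{Z}^n\to\mathbb{R}\cup\{+\infty\}$, $\operatorname{dom} f=\{x\in\mathbb{Z}^n: f(x)<+\infty\}$. $f$ is M-convex if $\operatorname{dom} f\neq\emptyset$ and for all $x,y\in\operatorname{dom} f$ and every $i$ with $x(i)>y(i)$ there is $j$ with $x(j)<y(j)$ such that $f(x)+f(y)\ge f(x-\chi_i+\chi_j)+f(y+\chi_i-\chi_j)$. For $x\in\operatorname{dom} f$ and $i,j\in N$, $f'(x;i,j)=f(x+\chi_i-\chi_j)-f(x)$ (possibly $+\infty$; $f'(x;i,i)=0$), and $\phi(x)=\min_{i,j\in N}f'(x;i,j)$. Step length: $\bar c(y;i,j)=\max\{\lambda\in\mathbb{Z}_{\ge 0}: f(y+\lambda(\chi_i-\chi_j))-f(y)=\lambda f'(y;i,j)\}$. Procedure M-IncSlope$(x)$ (for $\phi(x)<0$): set $y:=x$; for each $i\in N$ (each once, arbitrary order) and for each $j\in N\setminus\{i\}$ (each once, arbitrary order), if $f'(y;i,j)=\phi(x)$ replace $y$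 by $y+\bar c(y;i,j)(\chi_i-\chi_j)$; output $y$. Algorithm M-LSD2: $x:=x_0$; while $\phi(x)<0$, replace $x$ by the output of M-IncSlope$(x)$; output $x$ once $\phi(x)=0$. *)

theory Defs
  imports Main "HOL-Library.Extended_Real"
begin

(* Points of Z^n are functions 'a => int over a finite index type 'a (N = UNIV).
   Functions f : Z^n -> Z \<union> {+\<infinity>} are modelled as ('a => int) => ereal. *)

definition unitv :: "'a \<Rightarrow> 'a \<Rightarrow> int" where
  "unitv i = (\<lambda>k. if k = i then 1 else 0)"

definition mdom :: "(('a \<Rightarrow> int) \<Rightarrow> ereal) \<Rightarrow> ('a \<Rightarrow> int) set" where
  "mdom f = {x. f x < \<infinity>}"

definition int_valued :: "(('a \<Rightarrow> int) \<Rightarrow> ereal) \<Rightarrow> bool" where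
  "int_valued f \<longleftrightarrow> (\<forall>x. f x = \<infinity> \<or> (\<exists>m::int. f x = ereal (of_int m)))"

definition bounded_dom :: "(('a \<Rightarrow> int) \<Rightarrow> ereal) \<Rightarrow> bool" where
  "bounded_dom f \<longleftrightarrow> (\<exists>B::int. \<forall>x\<in>mdom f. \<forall>i. \<bar>x i\<bar> \<le> B)"

definition M_convex :: "(('a \<Rightarrow> int) \<Rightarrow> ereal) \<Rightarrow> bool" where
  "M_convex f \<longleftrightarrow> mdom f \<noteq> {} \<and>
     (\<forall>x\<in>mdom f. \<forall>y\<in>mdom f. \<forall>i. x i > y i \<longrightarrow>
        (\<exists>j. x j < y j \<and>
           f x + f y \<ge> f (\<lambda>k. x k - unitv i k + unitv j k) + f (\<lambda>k. y k + unitv i k - unitv j k)))"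

definition shift :: "('a \<Rightarrow> int) \<Rightarrow> int \<Rightarrow> 'a \<Rightarrow> 'a \<Rightarrow> ('a \<Rightarrow> int)" where
  "shift y l i j = (\<lambda>k. y k + l * (unitv i k - unitv j k))"

definition fder :: "(('a \<Rightarrow> int) \<Rightarrow> ereal) \<Rightarrow> ('a \<Rightarrow> int) \<Rightarrow> 'a \<Rightarrow> 'a \<Rightarrow> ereal" where
  "fder f x i j = (if i = j then 0 else f (shift x 1 i j) - f x)"

definition phi :: "(('a::finite \<Rightarrow> int) \<Rightarrow> ereal) \<Rightarrow> ('a \<Rightarrow> int) \<Rightarrow> ereal" where
  "phi f x = Min {fder f x i j | i j. True}"

definition cbar :: "(('a \<Rightarrow> int) \<Rightarrow> ereal) \<Rightarrow> ('a \<Rightarrow> int) \<Rightarrow> 'a \<Rightarrow> 'a \<Rightarrow> nat" where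
  "cbar f y i j = Max {l::nat. f (shift y (int l) i j) - f y = ereal (real l) * fder f y i j}"

(* the sequence of updates of M-IncSlope along a given list of pairs (i,j), with slope value c = phi(x) *)
definition incslope_pass ::
  "(('a \<Rightarrow> int) \<Rightarrow> ereal) \<Rightarrow> ereal \<Rightarrow> ('a \<Rightarrow> int) \<Rightarrow> ('a \<times> 'a) list \<Rightarrow> ('a \<Rightarrow> int)" where
  "incslope_pass f c y ps =
     fold (\<lambda>(i,j) z. if fder f z i j = c then shift z (int (cbar f z i j)) i j else z) ps y"

(* y is a possible output of M-IncSlope(x), for some choice of the (arbitrary) orders *)
definition IncSlope_out :: "(('a::finite \<Rightarrow> int) \<Rightarrow> ereal) \<Rightarrow> ('a \<Rightarrow> int) \<Rightarrow> ('a \<Rightarrow> int) \<Rightarrow> bool" where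
  "IncSlope_out f x y \<longleftrightarrow>
     (\<exists>is :: 'a list. \<exists>js :: 'a \<Rightarrow> 'a list.
        distinct is \<and> set is = UNIV \<and>
        (\<forall>i. distinct (js i) \<and> set (js i) = UNIV - {i}) \<and>
        y = incslope_pass f (phi f x) x (concat (map (\<lambda>i. map (\<lambda>j. (i, j)) (js i)) is)))"

definition LSD2_run :: "(('a::finite \<Rightarrow> int) \<Rightarrow> ereal) \<Rightarrow> ('a \<Rightarrow> int) \<Rightarrow> nat \<Rightarrow> bool" where
  "LSD2_run f x0 k \<longleftrightarrow>
     (\<exists>xs :: nat \<Rightarrow> ('a \<Rightarrow> int). xs 0 = x0 \<and>
        (\<forall>t<k. phi f (xs t) < 0 \<and> IncSlope_out f (xs t) (xs (Suc t))) \<and>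
        phi f (xs k) = 0)"

end

theory Submission
  imports Defs
begin

text \<open>Let \<open>c\<^sub>t < 0\<close> be the value of \<open>\<phi>\<close> before the \<open>t\<close>-th call of M-IncSlope. By the
  exchange axiom, during this call all slopes stay \<open>\<ge> c\<^sub>t\<close>, a pair \<open>(i, j)\<close> once treated never
  becomes steepest again (a new steepest pair \<open>(k, l)\<close> forces \<open>(k, j)\<close> to have been steepest
  before), and the first move lowers \<open>f\<close> by at least \<open>|c\<^sub>t|\<close>. As \<open>f\<close> is integer-valued, the
  call ends with \<open>\<phi> \<ge> c\<^sub>t + 1\<close>; since \<open>\<phi> = 0\<close> after \<open>k\<close> calls, \<open>c\<^sub>t \<le> -(k - t)\<close>, and
  summing the decreases gives \<open>f(x\<^sub>0) - min f \<ge> k(k+1)/2\<close>.\<close>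

lemma shift_shift [simp]: "shift (shift z a i j) b i j = shift z (a + b) i j"
  by (rule ext) (simp add: shift_def algebra_simps)

lemma shift_zero [simp]: "shift z 0 i j = z"
  by (rule ext) (simp add: shift_def)

lemma shift_diag [simp]: "shift z l i i = z"
  by (rule ext) (simp add: shift_def)

lemma shift_shift_cases:
  fixes y :: "'a \<Rightarrow> int" and i j k l :: 'a
  defines "a \<equiv> shift (shift y 1 i j) 1 k l"
  shows "a = y \<or> y i < a i \<or> y k < a k"
  unfolding a_def shift_def unitv_def by (auto simp: fun_eq_iff)

lemma shift_shift_exchange_cases:
  fixes y :: "'a \<Rightarrow> int" and i j k l :: 'a
  defines "a \<equiv> shift (shift y 1 i j) 1 k l"
  assumes "y p < a p" and "a q < y q"
  shows "(p = i \<and> q = j \<and> shift a (-1) p q = shift y 1 k l) \<or>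
         (p = i \<and> q = l \<and> shift a (-1) p q = shift y 1 k j) \<or>
         (p = k \<and> q = j \<and> shift a (-1) p q = shift y 1 i l) \<or>
         (p = k \<and> q = l \<and> shift a (-1) p q = shift y 1 i j)"
proof -
  have "p = i \<or> p = k" and "q = j \<or> q = l"
    using assms(2,3) unfolding a_def shift_def unitv_def by (auto split: if_splits)
  then show ?thesis unfolding a_def shift_def unitv_def by (auto simp: fun_eq_iff)
qed

lemma fold_concat: "fold g (concat xss) s = fold (fold g) xss s"
  by (induction xss arbitrary: s) auto

lemma quadratic_descent:
  fixes a p :: "nat \<Rightarrow> int"
  assumes last: "p k = 0"
    and incr: "\<And>t. t < k \<Longrightarrow> p t < p (Suc t)"
    and descent: "\<And>t. t < k \<Longrightarrow> a (Suc t) \<le> a t + p t"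
  shows "int k * (int k + 1) \<le> 2 * (a 0 - a k)"
proof -
  have p_le: "p t \<le> - int (k - t)" if "t \<le> k" for t
    using that
  proof (induction "k - t" arbitrary: t)
    case 0 then show ?case using last by simp
  next
    case (Suc d)
    then have "t < k" by simp
    moreover have "p (Suc t) \<le> - int (k - Suc t)" using Suc by (intro Suc.hyps(1)) simp_all
    ultimately show ?case using incr[of t] by simp
  qed
  have "2 * a m \<le> 2 * a 0 - int m * (2 * int k - int m + 1)" if "m \<le> k" for m
    using that
  proof (induction m)
    case 0 then show ?case by simp
  next
    case (Suc m)
    have "a (Suc m) \<le> a m - (int k - int m)"
      using descent[of m] p_le[of m] Suc.prems by (simp add: of_nat_diff)
    with Suc show ?case by (simp add: algebra_simps)
  qed
  from this[of k] show ?thesis by (simp add: algebra_simps)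
qed

lemma finite_fder_range: "finite {fder f z i j | i j. True}" for z :: "'a::finite \<Rightarrow> int"
proof -
  have "{fder f z i j | i j. True} = (\<lambda>(i, j). fder f z i j) ` UNIV" by auto
  then show ?thesis by simp
qed

lemma phi_le_fder: "phi f z \<le> fder f z i j"
  unfolding phi_def using finite_fder_range by (intro Min_le) auto

lemma phi_le_zero: "phi f z \<le> 0"
  using phi_le_fder[of f z undefined undefined] by (simp add: fder_def)

lemma phi_attained:
  obtains i j where "phi f z = fder f z i j"
proof -
  have "phi f z \<in> {fder f z i j | i j. True}"
    unfolding phi_def using finite_fder_range by (rule Min_in) auto
  with that show ?thesis by blast
qed

lemma le_phi_iff: "e \<le> phi f z \<longleftrightarrow> (\<forall>i j. e \<le> fder f z i j)"
  unfolding phi_def using finite_fder_range[of f z] by (subst Min_ge_iff) auto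

locale int_M_convex =
  fixes f :: "('a::finite \<Rightarrow> int) \<Rightarrow> ereal"
  assumes M_convex: "M_convex f" and int_valued: "int_valued f"
begin

definition fval :: "('a \<Rightarrow> int) \<Rightarrow> int" where
  "fval x = (THE m. f x = ereal (of_int m))"

lemma f_eq_fval: "x \<in> mdom f \<Longrightarrow> f x = ereal (of_int (fval x))"
proof -
  assume "x \<in> mdom f"
  then have "f x \<noteq> \<infinity>" by (simp add: mdom_def)
  with int_valued obtain m where m: "f x = ereal (of_int m)" unfolding int_valued_def by blast
  then have "fval x = m" unfolding fval_def by (rule the_equality) (use m in auto)
  with m show ?thesis by simp
qed

lemma f_notin_mdom: "x \<notin> mdom f \<Longrightarrow> f x = \<infinity>"
  by (simp add: mdom_def)

lemma exchange:
  assumes x: "x \<in> mdom f" and y: "y \<in> mdom f" and "y i < x i"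
  obtains j where "x j < y j" and "shift x (-1) i j \<in> mdom f" and "shift y 1 i j \<in> mdom f"
    and "fval (shift x (-1) i j) + fval (shift y 1 i j) \<le> fval x + fval y"
proof -
  from M_convex assms obtain j where j: "x j < y j"
    and le: "f (\<lambda>k. x k - unitv i k + unitv j k) + f (\<lambda>k. y k + unitv i k - unitv j k) \<le> f x + f y"
    unfolding M_convex_def by blast
  have "(\<lambda>k. x k - unitv i k + unitv j k) = shift x (-1) i j"
    and "(\<lambda>k. y k + unitv i k - unitv j k) = shift y 1 i j"
    by (simp_all add: shift_def fun_eq_iff)
  with le have le: "f (shift x (-1) i j) + f (shift y 1 i j) \<le> f x + f y" by simp
  have fin: "f x + f y = ereal (of_int (fval x + fval y))" using x y by (simp add: f_eq_fval)
  have not_minf: "f z \<noteq> -\<infinity>" for z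
    by (cases "z \<in> mdom f") (auto simp: f_eq_fval f_notin_mdom)
  have x': "shift x (-1) i j \<in> mdom f" and y': "shift y 1 i j \<in> mdom f"
    using le fin not_minf[of "shift x (-1) i j"] not_minf[of "shift y 1 i j"]
    unfolding mdom_def by (cases "f (shift x (-1) i j)"; cases "f (shift y 1 i j)"; simp)+
  with le fin have "fval (shift x (-1) i j) + fval (shift y 1 i j) \<le> fval x + fval y"
    by (simp add: f_eq_fval)
  with j x' y' that show ?thesis by blast
qed

definition slopes_ge :: "('a \<Rightarrow> int) \<Rightarrow> int \<Rightarrow> bool" where
  "slopes_ge z c \<longleftrightarrow> (\<forall>k l. shift z 1 k l \<in> mdom f \<longrightarrow> fval z + c \<le> fval (shift z 1 k l))"

definition slope_eq :: "('a \<Rightarrow> int) \<Rightarrow> int \<Rightarrow> 'a \<Rightarrow> 'a \<Rightarrow> bool" where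
  "slope_eq z c k l \<longleftrightarrow> k \<noteq> l \<and> shift z 1 k l \<in> mdom f \<and> fval (shift z 1 k l) = fval z + c"

text \<open>By the exchange axiom, the value after a double move from \<open>y\<close> is bounded below by the
  values after two single moves from \<open>y\<close>.\<close>

lemma slopes_ge_double_step:
  assumes y: "y \<in> mdom f" and slopes: "slopes_ge y c" and c: "c \<le> 0"
    and dom: "shift (shift y 1 i j) 1 k l \<in> mdom f"
  shows "fval y + 2 * c \<le> fval (shift (shift y 1 i j) 1 k l)"
proof -
  define a where "a = shift (shift y 1 i j) 1 k l"
  consider "a = y" | p where "y p < a p"
    using shift_shift_cases[of y i j k l] a_def by blast
  then show ?thesis
  proof cases
    case 1
    then show ?thesis using c a_def by simp
  next
    case 2
    from dom have "a \<in> mdom f" by (simp add: a_def)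
    from exchange[OF this y 2] obtain q where "a q < y q"
      and a': "shift a (-1) p q \<in> mdom f" and y': "shift y 1 p q \<in> mdom f"
      and le: "fval (shift a (-1) p q) + fval (shift y 1 p q) \<le> fval a + fval y" .
    then obtain r s where "shift a (-1) p q = shift y 1 r s"
      using shift_shift_exchange_cases[of y p i j k l q] 2 a_def by blast
    with a' y' slopes have "fval y + c \<le> fval (shift a (-1) p q)" "fval y + c \<le> fval (shift y 1 p q)"
      unfolding slopes_ge_def by simp_all
    with le show ?thesis using a_def by simp
  qed
qed

lemma slopes_ge_step:
  assumes "y \<in> mdom f" and "slopes_ge y c" and "c \<le> 0" and "slope_eq y c i j"
  shows "slopes_ge (shift y 1 i j) c"
  using slopes_ge_double_step[OF assms(1-3)] assms(4) unfolding slopes_ge_def slope_eq_def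
  by fastforce

lemma not_slope_eq_from_target:
  assumes slopes: "slopes_ge y c" and "c < 0" and ij: "slope_eq y c i j"
  shows "\<not> slope_eq (shift y 1 i j) c j l"
proof
  assume jl: "slope_eq (shift y 1 i j) c j l"
  have "shift (shift y 1 i j) 1 j l = shift y 1 i l"
    unfolding shift_def unitv_def by (auto simp: fun_eq_iff)
  with jl have "shift y 1 i l \<in> mdom f" and "fval (shift y 1 i l) = fval (shift y 1 i j) + c"
    unfolding slope_eq_def by auto
  with slopes have "fval y + c \<le> fval (shift y 1 i j) + c" unfolding slopes_ge_def by metis
  with ij \<open>c < 0\<close> show False unfolding slope_eq_def by simp
qed

lemma slope_eq_after_step:
  assumes y: "y \<in> mdom f" and slopes: "slopes_ge y c" and c: "c < 0" and ij: "slope_eq y c i j"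
    and kl: "slope_eq (shift y 1 i j) c k l" and not_kl: "\<not> slope_eq y c k l"
  shows "(k = i \<and> l = j) \<or> (k \<noteq> i \<and> slope_eq y c k j)"
proof -
  define a where "a = shift (shift y 1 i j) 1 k l"
  have "k \<noteq> l" and a: "a \<in> mdom f" and val_a: "fval a = fval y + 2 * c"
    using ij kl unfolding slope_eq_def a_def by (auto simp del: shift_shift)
  have "k \<noteq> j" using not_slope_eq_from_target[OF slopes c ij] kl by blast
  then have "y k < a k" using \<open>k \<noteq> l\<close> unfolding a_def shift_def unitv_def by auto
  from exchange[OF a y this] obtain q where "a q < y q"
    and a': "shift a (-1) k q \<in> mdom f" and y': "shift y 1 k q \<in> mdom f"
    and le: "fval (shift a (-1) k q) + fval (shift y 1 k q) \<le> fval a + fval y" .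
  then have cases: "(k = i \<and> q = j \<and> shift a (-1) k q = shift y 1 k l) \<or>
      (k = i \<and> q = l \<and> shift a (-1) k q = shift y 1 k j) \<or>
      (q = j \<and> shift a (-1) k q = shift y 1 i l) \<or> (q = l \<and> shift a (-1) k q = shift y 1 i j)"
    using shift_shift_exchange_cases[of y k i j k l q] \<open>y k < a k\<close> a_def by blast
  then obtain r s where "shift a (-1) k q = shift y 1 r s" by blast
  with a' y' slopes have "fval y + c \<le> fval (shift a (-1) k q)" "fval y + c \<le> fval (shift y 1 k q)"
    unfolding slopes_ge_def by simp_all
  with le val_a have val_a': "fval (shift a (-1) k q) = fval y + c"
    and val_y': "fval (shift y 1 k q) = fval y + c" by linarith+
  show ?thesis
  proof (cases "q = l")
    case True
    with not_kl \<open>k \<noteq> l\<close> y' val_y' show ?thesis unfolding slope_eq_def by auto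
  next
    case False
    with cases have "q = j" by blast
    with \<open>k \<noteq> j\<close> y' val_y' have kj: "slope_eq y c k j" unfolding slope_eq_def by auto
    have "k \<noteq> i"
    proof
      assume "k = i"
      with cases False \<open>q = j\<close> have "shift a (-1) k q = shift y 1 k l" by auto
      with \<open>k \<noteq> l\<close> a' val_a' have "slope_eq y c k l" unfolding slope_eq_def by auto
      with not_kl show False ..
    qed
    with kj show ?thesis by blast
  qed
qed

lemma line_exchange:
  assumes ij: "i \<noteq> j" and "a < b" and a: "shift z a i j \<in> mdom f" and b: "shift z b i j \<in> mdom f"
  shows "shift z (a + 1) i j \<in> mdom f" and "shift z (b - 1) i j \<in> mdom f"
    and "fval (shift z (a + 1) i j) + fval (shift z (b - 1) i j)
       \<le> fval (shift z a i j) + fval (shift z b i j)"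
proof -
  have "shift z a i j i < shift z b i j i" using ij \<open>a < b\<close> by (simp add: shift_def unitv_def)
  from exchange[OF b a this] obtain q where q: "shift z b i j q < shift z a i j q"
    and b': "shift (shift z b i j) (-1) i q \<in> mdom f" and a': "shift (shift z a i j) 1 i q \<in> mdom f"
    and le: "fval (shift (shift z b i j) (-1) i q) + fval (shift (shift z a i j) 1 i q)
      \<le> fval (shift z b i j) + fval (shift z a i j)" .
  have "q = j"
  proof (rule ccontr)
    assume "q \<noteq> j"
    with q \<open>a < b\<close> show False by (auto simp: shift_def unitv_def split: if_splits)
  qed
  with a' b' le show "shift z (a + 1) i j \<in> mdom f" "shift z (b - 1) i j \<in> mdom f"
    "fval (shift z (a + 1) i j) + fval (shift z (b - 1) i j)
       \<le> fval (shift z a i j) + fval (shift z b i j)"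
    by (simp_all add: algebra_simps)
qed

lemma mdom_line_interval:
  assumes "i \<noteq> j" and "shift z a i j \<in> mdom f" and "shift z b i j \<in> mdom f" and "a \<le> t" and "t \<le> b"
  shows "shift z t i j \<in> mdom f"
  using assms(2-)
proof (induction "nat (b - a)" arbitrary: a)
  case 0
  then have "t = a" by linarith
  with 0 show ?case by simp
next
  case (Suc n)
  show ?case
  proof (cases "t = a")
    case True
    with Suc show ?thesis by simp
  next
    case False
    with Suc.prems have "shift z (a + 1) i j \<in> mdom f"
      by (intro line_exchange(1)[OF \<open>i \<noteq> j\<close> _ Suc.prems(1,2)]) simp
    with Suc False show ?thesis by (intro Suc.hyps(1)[of "a + 1"]) auto
  qed
qed

lemma line_increment_ge:
  assumes z: "z \<in> mdom f" and ij: "slope_eq z c i j" and end_dom: "shift z (int lam) i j \<in> mdom f"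
    and "m < lam"
  shows "c \<le> fval (shift z (int (Suc m)) i j) - fval (shift z (int m) i j)"
proof -
  have "i \<noteq> j" using ij by (simp add: slope_eq_def)
  have line_dom: "shift z (int n) i j \<in> mdom f" if "n \<le> lam" for n
    using mdom_line_interval[OF \<open>i \<noteq> j\<close>, of z 0 "int lam" "int n"] z end_dom that by simp
  from \<open>m < lam\<close> show ?thesis
  proof (induction m)
    case 0
    with ij show ?case unfolding slope_eq_def by simp
  next
    case (Suc m)
    have "shift z (int m) i j \<in> mdom f" "shift z (int m + 2) i j \<in> mdom f"
      using line_dom[of m] line_dom[of "m + 2"] Suc.prems by (simp_all add: add.commute)
    from line_exchange(3)[OF \<open>i \<noteq> j\<close> _ this] Suc show ?case by (simp add: algebra_simps)
  qed
qed

lemma line_affine: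
  assumes z: "z \<in> mdom f" and ij: "slope_eq z c i j"
    and end_dom: "shift z (int lam) i j \<in> mdom f"
    and end_val: "fval (shift z (int lam) i j) = fval z + int lam * c" and "m \<le> lam"
  shows "shift z (int m) i j \<in> mdom f" and "fval (shift z (int m) i j) = fval z + int m * c"
proof -
  have "i \<noteq> j" using ij by (simp add: slope_eq_def)
  define g where "g n = fval (shift z (int n) i j)" for n
  have telescope: "g n + int d * c \<le> g (n + d)" if "n + d \<le> lam" for n d
    using that
  proof (induction d)
    case (Suc d)
    then have "c \<le> g (Suc (n + d)) - g (n + d)"
      unfolding g_def by (intro line_increment_ge[OF z ij end_dom]) simp
    with Suc show ?case by (simp add: algebra_simps)
  qed simp
  from telescope[of 0 m] telescope[of m "lam - m"] \<open>m \<le> lam\<close> end_val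
  show "fval (shift z (int m) i j) = fval z + int m * c"
    unfolding g_def by (simp add: of_nat_diff algebra_simps)
  show "shift z (int m) i j \<in> mdom f"
    using mdom_line_interval[OF \<open>i \<noteq> j\<close>, of z 0 "int lam" "int m"] z end_dom \<open>m \<le> lam\<close> by simp
qed

lemma fder_eq_iff_slope_eq:
  assumes "z \<in> mdom f" and "i \<noteq> j"
  shows "fder f z i j = ereal (of_int c) \<longleftrightarrow> slope_eq z c i j"
  using assms
  by (cases "shift z 1 i j \<in> mdom f") (auto simp: fder_def slope_eq_def f_eq_fval f_notin_mdom)

lemma slopes_ge_phi:
  assumes z: "z \<in> mdom f" and "phi f z = ereal (of_int c)"
  shows "slopes_ge z c"
  unfolding slopes_ge_def
proof (intro allI impI)
  fix k l
  assume kl: "shift z 1 k l \<in> mdom f"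
  have "ereal (of_int c) \<le> fder f z k l" using assms(2) phi_le_fder by metis
  with z kl show "fval z + c \<le> fval (shift z 1 k l)"
    by (cases "k = l") (simp_all add: fder_def f_eq_fval)
qed

lemma slope_eq_phi:
  assumes z: "z \<in> mdom f" and phi: "phi f z = ereal (of_int c)" and "c < 0"
  obtains i j where "slope_eq z c i j"
proof -
  obtain i j where "phi f z = fder f z i j" by (rule phi_attained)
  with phi \<open>c < 0\<close> have "fder f z i j = ereal (of_int c)" and "i \<noteq> j" by (auto simp: fder_def)
  with fder_eq_iff_slope_eq[OF z] that show ?thesis by blast
qed

lemma phi_ge_succ:
  assumes z: "z \<in> mdom f" and slopes: "slopes_ge z c" and none: "\<forall>k l. \<not> slope_eq z c k l"
    and "c < 0"
  shows "ereal (of_int (c + 1)) \<le> phi f z"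
  unfolding le_phi_iff
proof (intro allI)
  fix i j
  show "ereal (of_int (c + 1)) \<le> fder f z i j"
  proof (cases "i \<noteq> j \<and> shift z 1 i j \<in> mdom f")
    case True
    with slopes none have "fval z + c + 1 \<le> fval (shift z 1 i j)"
      unfolding slopes_ge_def slope_eq_def by force
    with z True show ?thesis by (simp add: fder_def f_eq_fval)
  next
    case False
    with z \<open>c < 0\<close> show ?thesis by (auto simp: fder_def f_eq_fval f_notin_mdom)
  qed
qed

definition phi_int :: "('a \<Rightarrow> int) \<Rightarrow> int" where
  "phi_int z = (THE p. phi f z = ereal (of_int p))"

lemma phi_eq_phi_int:
  assumes z: "z \<in> mdom f"
  shows "phi f z = ereal (of_int (phi_int z))"
proof -
  obtain i j where ij: "phi f z = fder f z i j" by (rule phi_attained)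
  have "\<exists>p. phi f z = ereal (of_int p)"
  proof (cases "i \<noteq> j \<and> shift z 1 i j \<in> mdom f")
    case True
    with z ij show ?thesis
      by (auto simp: fder_def f_eq_fval intro: exI[of _ "fval (shift z 1 i j) - fval z"])
  next
    case False
    with z ij phi_le_zero[of f z] show ?thesis
      by (auto simp: fder_def f_eq_fval f_notin_mdom intro: exI[of _ 0])
  qed
  then obtain p where p: "phi f z = ereal (of_int p)" ..
  then have "phi_int z = p" unfolding phi_int_def by (rule the_equality) (use p in auto)
  with p show ?thesis by simp
qed

end

locale bounded_int_M_convex = int_M_convex +
  assumes bounded: "bounded_dom f"
begin

lemma finite_mdom: "finite (mdom f)"
proof -
  from bounded obtain B where B: "\<forall>x\<in>mdom f. \<forall>i. \<bar>x i\<bar> \<le> B" unfolding bounded_dom_def by blast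
  let ?box = "{g :: 'a \<Rightarrow> int. \<forall>x. (x \<in> UNIV \<longrightarrow> g x \<in> {-B..B}) \<and> (x \<notin> UNIV \<longrightarrow> g x = 0)}"
  have "mdom f \<subseteq> ?box"
  proof
    fix g
    assume "g \<in> mdom f"
    with B have "-B \<le> g x \<and> g x \<le> B" for x by (meson abs_le_D1 abs_le_D2 minus_le_iff)
    then show "g \<in> ?box" by simp
  qed
  moreover have "finite ?box" by (rule finite_set_of_finite_funs) auto
  ultimately show ?thesis by (rule finite_subset)
qed

lemma cbar_step:
  assumes z: "z \<in> mdom f" and ij: "slope_eq z c i j"
  defines "lam \<equiv> cbar f z i j"
  shows "1 \<le> lam" and "shift z (int lam) i j \<in> mdom f"
    and "fval (shift z (int lam) i j) = fval z + int lam * c"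
    and "\<not> slope_eq (shift z (int lam) i j) c i j"
proof -
  have "i \<noteq> j" using ij by (simp add: slope_eq_def)
  with z ij have fder: "fder f z i j = ereal (of_int c)" by (simp add: fder_eq_iff_slope_eq)
  define S where "S = {l::nat. f (shift z (int l) i j) - f z = ereal (real l) * fder f z i j}"
  have S_iff: "l \<in> S \<longleftrightarrow> shift z (int l) i j \<in> mdom f \<and> fval (shift z (int l) i j) = fval z + int l * c"
    for l
  proof (cases "shift z (int l) i j \<in> mdom f")
    case True
    have "l \<in> S \<longleftrightarrow> real_of_int (fval (shift z (int l) i j)) - real_of_int (fval z) = real l * real_of_int c"
      unfolding S_def using True z fder by (simp add: f_eq_fval)
    also have "\<dots> \<longleftrightarrow> fval (shift z (int l) i j) = fval z + int l * c"
    proof -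
      have "real l * real_of_int c = real_of_int (int l * c)" by simp
      then show ?thesis by linarith
    qed
    finally show ?thesis using True by simp
  next
    case False
    with z fder show ?thesis unfolding S_def by (simp add: f_eq_fval f_notin_mdom)
  qed
  have "inj (\<lambda>l::nat. shift z (int l) i j)"
    using \<open>i \<noteq> j\<close> by (intro injI) (auto simp: shift_def unitv_def fun_eq_iff dest: spec[of _ i])
  then have "finite ((\<lambda>l. shift z (int l) i j) -` mdom f)"
    using finite_mdom by (intro finite_vimageI)
  moreover have "S \<subseteq> (\<lambda>l. shift z (int l) i j) -` mdom f" using S_iff by blast
  ultimately have "finite S" by (rule finite_subset[rotated])
  have "1 \<in> S" using S_iff ij unfolding slope_eq_def by simp
  have lam: "lam = Max S" unfolding lam_def cbar_def S_def ..
  have "lam \<in> S" and "1 \<le> lam"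
    using \<open>finite S\<close> \<open>1 \<in> S\<close> unfolding lam by (auto intro: Max_in)
  moreover have "Suc lam \<notin> S" using Max_ge[OF \<open>finite S\<close>, of "Suc lam"] lam by auto
  ultimately show "1 \<le> lam" "shift z (int lam) i j \<in> mdom f"
    "fval (shift z (int lam) i j) = fval z + int lam * c" "\<not> slope_eq (shift z (int lam) i j) c i j"
    using S_iff[of lam] S_iff[of "Suc lam"] unfolding slope_eq_def by (simp_all add: algebra_simps)
qed

lemma long_step:
  assumes z: "z \<in> mdom f" and slopes: "slopes_ge z c" and c: "c < 0" and ij: "slope_eq z c i j"
    and treated: "\<forall>k l. (k, l) \<in> K \<longrightarrow> \<not> slope_eq z c k l" and "(i, j) \<notin> K"
    and closed: "\<forall>k l. (k, l) \<in> K \<longrightarrow> k \<noteq> i \<longrightarrow> k \<noteq> j \<longrightarrow> (k, j) \<in> K"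
  defines "z' \<equiv> shift z (int (cbar f z i j)) i j"
  shows "z' \<in> mdom f" and "slopes_ge z' c"
    and "\<forall>k l. (k, l) \<in> insert (i, j) K \<longrightarrow> \<not> slope_eq z' c k l"
    and "fval z' \<le> fval z + c"
proof -
  have "i \<noteq> j" using ij by (simp add: slope_eq_def)
  define lam where "lam = cbar f z i j"
  note line_end = cbar_step[OF z ij, folded lam_def]
  note on_line = line_affine[OF z ij line_end(2,3)]
  have "slopes_ge (shift z (int m) i j) c \<and> (\<forall>k l. (k, l) \<in> K \<longrightarrow> \<not> slope_eq (shift z (int m) i j) c k l)"
    if "m \<le> lam" for m
    using that
  proof (induction m)
    case 0
    with slopes treated show ?case by simp
  next
    case (Suc m)
    define y where "y = shift z (int m) i j"
    have y: "y \<in> mdom f" and y_slopes: "slopes_ge y c"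
      and y_treated: "\<forall>k l. (k, l) \<in> K \<longrightarrow> \<not> slope_eq y c k l"
      using Suc on_line(1)[of m] y_def by auto
    have next_y: "shift y 1 i j = shift z (int (Suc m)) i j" unfolding y_def by (simp add: add.commute)
    have y_ij: "slope_eq y c i j"
      using on_line[of m] on_line[of "Suc m"] Suc.prems \<open>i \<noteq> j\<close> next_y
      unfolding slope_eq_def y_def[symmetric] by (simp add: algebra_simps)
    have "\<not> slope_eq (shift y 1 i j) c k l" if "(k, l) \<in> K" for k l
    proof
      assume "slope_eq (shift y 1 i j) c k l"
      from slope_eq_after_step[OF y y_slopes c y_ij this] y_treated that \<open>(i, j) \<notin> K\<close>
      have "k \<noteq> i" and kj: "slope_eq y c k j" by blast+
      moreover from kj have "k \<noteq> j" by (simp add: slope_eq_def)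
      ultimately show False using closed y_treated that by blast
    qed
    with slopes_ge_step[OF y y_slopes _ y_ij] c next_y show ?case by auto
  qed
  from this[of lam] line_end on_line(1)[of lam]
  show "z' \<in> mdom f" "slopes_ge z' c" "\<forall>k l. (k, l) \<in> insert (i, j) K \<longrightarrow> \<not> slope_eq z' c k l"
    unfolding z'_def lam_def by auto
  have "int lam * c \<le> 1 * c" using line_end(1) c by (intro mult_right_mono_neg) auto
  with line_end(3) show "fval z' \<le> fval z + c" unfolding z'_def lam_def by simp
qed

text \<open>The invariant of M-IncSlope\<open>(x)\<close>, with \<open>c = \<phi>(x)\<close>, at the current point \<open>z\<close> once the pairs
  in \<open>K\<close> have been treated.\<close>

definition pass_inv :: "('a \<Rightarrow> int) \<Rightarrow> int \<Rightarrow> ('a \<Rightarrow> int) \<Rightarrow> ('a \<times> 'a) set \<Rightarrow> bool" where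
  "pass_inv x c z K \<longleftrightarrow> z \<in> mdom f \<and> slopes_ge z c \<and> (\<forall>k l. (k, l) \<in> K \<longrightarrow> \<not> slope_eq z c k l)
     \<and> (z = x \<or> fval z \<le> fval x + c)"

definition pass_step :: "int \<Rightarrow> 'a \<times> 'a \<Rightarrow> ('a \<Rightarrow> int) \<Rightarrow> ('a \<Rightarrow> int)" where
  "pass_step c = (\<lambda>(i, j) z. if fder f z i j = ereal (of_int c) then shift z (int (cbar f z i j)) i j else z)"

lemma pass_inv_step:
  assumes inv: "pass_inv x c z K" and c: "c < 0" and "i \<noteq> j" and "(i, j) \<notin> K"
    and closed: "\<forall>k l. (k, l) \<in> K \<longrightarrow> k \<noteq> i \<longrightarrow> k \<noteq> j \<longrightarrow> (k, j) \<in> K"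
  shows "pass_inv x c (pass_step c (i, j) z) (insert (i, j) K)"
proof -
  have z: "z \<in> mdom f" and slopes: "slopes_ge z c" and treated: "\<forall>k l. (k, l) \<in> K \<longrightarrow> \<not> slope_eq z c k l"
    and descended: "z = x \<or> fval z \<le> fval x + c" using inv unfolding pass_inv_def by auto
  show ?thesis
  proof (cases "slope_eq z c i j")
    case True
    note step = long_step[OF z slopes c True treated \<open>(i, j) \<notin> K\<close> closed]
    from True z \<open>i \<noteq> j\<close> have "pass_step c (i, j) z = shift z (int (cbar f z i j)) i j"
      by (simp add: pass_step_def fder_eq_iff_slope_eq)
    with step descended c show ?thesis unfolding pass_inv_def by auto
  next
    case False
    with z \<open>i \<noteq> j\<close> have "pass_step c (i, j) z = z" by (simp add: pass_step_def fder_eq_iff_slope_eq)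
    with inv False show ?thesis unfolding pass_inv_def by auto
  qed
qed

lemma pass_inv_row:
  assumes c: "c < 0" and "i \<notin> I"
  shows "pass_inv x c z ({(k, l). k \<in> I} \<union> {(i, l) | l. l \<in> J}) \<Longrightarrow> distinct js \<Longrightarrow> set js \<inter> J = {}
    \<Longrightarrow> i \<notin> set js \<Longrightarrow>
    pass_inv x c (fold (pass_step c) (map (\<lambda>j. (i, j)) js) z) ({(k, l). k \<in> I} \<union> {(i, l) | l. l \<in> J \<union> set js})"
proof (induction js arbitrary: z J)
  case (Cons j js)
  have "pass_inv x c (pass_step c (i, j) z) (insert (i, j) ({(k, l). k \<in> I} \<union> {(i, l) | l. l \<in> J}))"
    using Cons.prems \<open>i \<notin> I\<close> by (intro pass_inv_step[OF Cons.prems(1) c]) auto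
  moreover have "insert (i, j) ({(k, l). k \<in> I} \<union> {(i, l) | l. l \<in> J})
      = {(k, l). k \<in> I} \<union> {(i, l) | l. l \<in> insert j J}" by auto
  ultimately show ?case using Cons.prems by (auto intro: Cons.IH[of _ "insert j J", simplified])
qed simp

lemma pass_inv_mono:
  assumes "pass_inv x c z K" and "\<And>k l. (k, l) \<in> K' \<Longrightarrow> (k, l) \<in> K \<or> k = l"
  shows "pass_inv x c z K'"
  using assms unfolding pass_inv_def slope_eq_def by blast

lemma pass_inv_rows:
  assumes c: "c < 0" and js: "\<forall>i. distinct (js i) \<and> set (js i) = UNIV - {i}"
  shows "pass_inv x c z {(k, l). k \<in> I} \<Longrightarrow> distinct is \<Longrightarrow> set is \<inter> I = {} \<Longrightarrow>
    pass_inv x c (fold (\<lambda>i. fold (pass_step c) (map (\<lambda>j. (i, j)) (js i))) is z) {(k, l). k \<in> I \<union> set is}"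
proof (induction "is" arbitrary: z I)
  case (Cons i "is")
  from Cons.prems have "i \<notin> I" by auto
  from Cons.prems(1) have "pass_inv x c z ({(k, l). k \<in> I} \<union> {(i, l) | l. l \<in> {}})" by simp
  then have "pass_inv x c (fold (pass_step c) (map (\<lambda>j. (i, j)) (js i)) z)
      ({(k, l). k \<in> I} \<union> {(i, l) | l. l \<in> {} \<union> set (js i)})"
    by (rule pass_inv_row[OF c \<open>i \<notin> I\<close>]) (use js in auto)
  then have "pass_inv x c (fold (pass_step c) (map (\<lambda>j. (i, j)) (js i)) z) {(k, l). k \<in> insert i I}"
    by (rule pass_inv_mono) (use js in auto)
  with Cons.prems show ?case by (auto intro: Cons.IH[of _ "insert i I", simplified])
qed simp

lemma incslope_out_descent:
  assumes x: "x \<in> mdom f" and phi: "phi f x = ereal (of_int c)" and c: "c < 0"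
    and "IncSlope_out f x y"
  shows "y \<in> mdom f" and "fval y \<le> fval x + c" and "ereal (of_int (c + 1)) \<le> phi f y"
proof -
  from \<open>IncSlope_out f x y\<close> obtain "is" js where "distinct is" and "set is = UNIV"
    and js: "\<forall>i. distinct (js i) \<and> set (js i) = UNIV - {i}"
    and y: "y = incslope_pass f (phi f x) x (concat (map (\<lambda>i. map (\<lambda>j. (i, j)) (js i)) is))"
    unfolding IncSlope_out_def by blast
  have y_fold: "y = fold (\<lambda>i. fold (pass_step c) (map (\<lambda>j. (i, j)) (js i))) is x"
    unfolding y incslope_pass_def phi pass_step_def by (simp add: fold_concat fold_map o_def)
  have "pass_inv x c x {(k, l). k \<in> {}}"
    using x slopes_ge_phi[OF x phi] unfolding pass_inv_def by simp
  from pass_inv_rows[OF c js this \<open>distinct is\<close>]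
  have "pass_inv x c y {(k, l). k \<in> {} \<union> set is}" unfolding y_fold by simp
  with \<open>set is = UNIV\<close> have y: "y \<in> mdom f" "slopes_ge y c" "\<forall>k l. \<not> slope_eq y c k l"
    and "y = x \<or> fval y \<le> fval x + c" unfolding pass_inv_def by auto
  moreover have "y \<noteq> x" using y(3) slope_eq_phi[OF x phi c] by metis
  ultimately show "y \<in> mdom f" "fval y \<le> fval x + c" "ereal (of_int (c + 1)) \<le> phi f y"
    using phi_ge_succ[OF y c] by auto
qed

lemma LSD2_run_descent:
  assumes x0: "x0 \<in> mdom f" and "LSD2_run f x0 k"
  obtains w where "w \<in> mdom f" and "int k * (int k + 1) \<le> 2 * (fval x0 - fval w)"
proof -
  from \<open>LSD2_run f x0 k\<close> obtain xs where xs0: "xs 0 = x0"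
    and calls: "\<forall>t<k. phi f (xs t) < 0 \<and> IncSlope_out f (xs t) (xs (Suc t))"
    and final: "phi f (xs k) = 0" unfolding LSD2_run_def by blast
  have call: "xs (Suc t) \<in> mdom f" "fval (xs (Suc t)) \<le> fval (xs t) + phi_int (xs t)"
    "phi_int (xs t) < phi_int (xs (Suc t))"
    if "t < k" and "xs t \<in> mdom f" for t
  proof -
    note phi = phi_eq_phi_int[OF \<open>xs t \<in> mdom f\<close>]
    from calls \<open>t < k\<close> phi have "phi_int (xs t) < 0" by auto
    with calls \<open>t < k\<close> phi that have "xs (Suc t) \<in> mdom f"
      "fval (xs (Suc t)) \<le> fval (xs t) + phi_int (xs t)"
      "ereal (of_int (phi_int (xs t) + 1)) \<le> phi f (xs (Suc t))"
      using incslope_out_descent[of "xs t" "phi_int (xs t)" "xs (Suc t)"] by auto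
    with phi_eq_phi_int[of "xs (Suc t)"]
    show "xs (Suc t) \<in> mdom f" "fval (xs (Suc t)) \<le> fval (xs t) + phi_int (xs t)"
      "phi_int (xs t) < phi_int (xs (Suc t))" by auto
  qed
  have dom: "xs t \<in> mdom f" if "t \<le> k" for t
    using that by (induction t) (auto simp: xs0 x0 call(1))
  have "phi_int (xs k) = 0" using phi_eq_phi_int[OF dom[of k]] final by simp
  then have "int k * (int k + 1) \<le> 2 * (fval (xs 0) - fval (xs k))"
    using call(2,3) dom by (intro quadratic_descent[where p = "\<lambda>t. phi_int (xs t)"]) auto
  with dom[of k] xs0 that show ?thesis by blast
qed

lemma Min_mdom_attained:
  obtains u where "u \<in> mdom f" and "Min (f ` mdom f) = f u" and "\<And>w. w \<in> mdom f \<Longrightarrow> fval u \<le> fval w"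
proof -
  have fin: "finite (f ` mdom f)" using finite_mdom by simp
  moreover have "f ` mdom f \<noteq> {}" using M_convex by (simp add: M_convex_def)
  ultimately obtain u where u: "u \<in> mdom f" and min: "Min (f ` mdom f) = f u"
    using Min_in by (metis imageE)
  have "fval u \<le> fval w" if "w \<in> mdom f" for w
    using Min_le[OF fin, of "f w"] that u min by (simp add: f_eq_fval)
  with u min that show ?thesis by blast
qed

end

theorem mainTheorem6:
  fixes f :: "('a::finite \<Rightarrow> int) \<Rightarrow> ereal" and x0 :: "'a \<Rightarrow> int" and k :: nat
  assumes "M_convex f" and "int_valued f" and "bounded_dom f"
    and "x0 \<in> mdom f"
    and "LSD2_run f x0 k"
  shows "ereal ((real k)\<^sup>2 / 2) \<le> f x0 - Min (f ` mdom f)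
       \<and> real k \<le> sqrt (2 * real_of_ereal (f x0 - Min (f ` mdom f)))"
proof -
  interpret bounded_int_M_convex f using assms(1-3) by unfold_locales
  obtain w where "w \<in> mdom f" and w: "int k * (int k + 1) \<le> 2 * (fval x0 - fval w)"
    using LSD2_run_descent[OF assms(4,5)] .
  obtain u where "u \<in> mdom f" and min: "Min (f ` mdom f) = f u"
    and u_min: "\<And>w. w \<in> mdom f \<Longrightarrow> fval u \<le> fval w"
    using Min_mdom_attained by blast
  have "int k * int k \<le> int k * (int k + 1)" by (intro mult_left_mono) simp_all
  also note w
  also have "2 * (fval x0 - fval w) \<le> 2 * (fval x0 - fval u)" using u_min[OF \<open>w \<in> mdom f\<close>] by simp
  finally have "int k * int k \<le> 2 * (fval x0 - fval u)" .
  then have "real_of_int (int k * int k) \<le> real_of_int (2 * (fval x0 - fval u))"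
    by (simp only: of_int_le_iff)
  then have "(real k)\<^sup>2 \<le> 2 * real_of_int (fval x0 - fval u)" by (simp add: power2_eq_square)
  moreover have "f x0 - Min (f ` mdom f) = ereal (of_int (fval x0 - fval u))"
    using min \<open>u \<in> mdom f\<close> assms(4) by (simp add: f_eq_fval)
  ultimately show ?thesis by (auto intro: real_le_rsqrt)
qed

end
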